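(* $\mathfrak{ss}_n=3$.
   Context: Let $\mathfrak S_{cc}$ be the set of all sequences $\mathbf a=\langle a_i:i\in\omega\rangle$ of rational numbers with $a_i\to0$ such that $\sum_i a_i$ is conditionally convergent, i.e. converges to a real number and is conditional. A series $\sum\mathbf b$ is conditional if the sum of its positive terms is $+\infty$ and the sum of its negative terms is $-\infty$. Let $[\omega]^\omega_\omega$ be the set of infinite coinfinite subsets of $\omega$; for such $X$ with increasing enumeration $\langle i_n\rangle$, $\sum_X\mathbf a$ denotes $\sum_n a_{i_n}$. $\mathfrak{ss}_n$ is the least cardinality of a family $\mathcal X\subseteq[\omega]^\omega_\omega$ such that for every $\mathbf a\in\mathfrak S_{cc}$ there is $X\in\mathcal X$ with $\sum_X\mathbf a$ conditional. *)

theory Defs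
  imports "HOL-Analysis.Analysis" "HOL-Library.Infinite_Set"
begin

definition conditional_series :: "(nat \<Rightarrow> real) \<Rightarrow> bool" where
  "conditional_series b \<longleftrightarrow>
     filterlim (\<lambda>N. \<Sum>n<N. max (b n) 0) at_top sequentially \<and>
     filterlim (\<lambda>N. \<Sum>n<N. min (b n) 0) at_bot sequentially"

definition S_cc :: "(nat \<Rightarrow> rat) set" where
  "S_cc = {a. (\<lambda>n. real_of_rat (a n)) \<longlonglongrightarrow> 0 \<and>
              summable (\<lambda>n. real_of_rat (a n)) \<and>
              conditional_series (\<lambda>n. real_of_rat (a n))}"

definition inf_coinf :: "nat set set" where
  "inf_coinf = {X. infinite X \<and> infinite (UNIV - X)}"

definition subseries :: "nat set \<Rightarrow> (nat \<Rightarrow> rat) \<Rightarrow> nat \<Rightarrow> real" where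
  "subseries X a n = real_of_rat (a (Infinite_Set.enumerate X n))"

definition ss_n_family :: "nat set set \<Rightarrow> bool" where
  "ss_n_family F \<longleftrightarrow> F \<subseteq> inf_coinf \<and>
     (\<forall>a\<in>S_cc. \<exists>X\<in>F. conditional_series (subseries X a))"

end

theory Submission
  imports Defs
begin

text \<open>The complements of the three residue classes mod 3 form a witnessing family: for a
  conditionally convergent series, the positive terms have divergent sum on some residue class and
  the negative terms on some residue class, and the complement of a third class contains both.
  Conversely, given two infinite coinfinite sets X and Y, place 1 - 1 + 1/2 - 1/2 + 1/3 - ...
  along an increasing sequence whose even-indexed entries avoid X and whose odd-indexed entries
  avoid Y, with zeros elsewhere. Inserting zeros keeps the series conditionally convergent, but
  along X only nonpositive and along Y only nonnegative terms remain.\<close>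

lemma filterlim_partial_sums_at_top_iff_not_summable:
  fixes f :: "nat \<Rightarrow> real"
  assumes nonneg: "\<And>n. 0 \<le> f n"
  shows "filterlim (\<lambda>N. \<Sum>n<N. f n) at_top sequentially \<longleftrightarrow> \<not> summable f"
proof
  assume lim: "filterlim (\<lambda>N. \<Sum>n<N. f n) at_top sequentially"
  show "\<not> summable f"
  proof
    assume "summable f"
    then have "\<And>N. (\<Sum>n<N. f n) \<le> suminf f"
      using nonneg by (intro sum_le_suminf) auto
    moreover obtain N where "suminf f + 1 \<le> (\<Sum>n<N. f n)"
      using lim unfolding filterlim_at_top eventually_sequentially by blast
    ultimately show False
      by (metis add_le_same_cancel1 dual_order.trans not_one_le_zero)
  qed
next
  assume not_summable: "\<not> summable f"
  show "filterlim (\<lambda>N. \<Sum>n<N. f n) at_top sequentially"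
    unfolding filterlim_at_top eventually_sequentially
  proof
    fix Z :: real
    obtain n where n: "Z < (\<Sum>k\<le>n. f k)"
      using bounded_imp_summable[of f Z] nonneg not_summable by (meson not_le)
    have "(\<Sum>k\<le>n. f k) \<le> (\<Sum>k<N. f k)" if "Suc n \<le> N" for N
      using nonneg that by (intro sum_mono2) auto
    with n show "\<exists>N0. \<forall>N\<ge>N0. Z \<le> (\<Sum>k<N. f k)"
      by (meson less_imp_le order_trans)
  qed
qed

lemma conditional_series_iff_not_summable_on:
  "conditional_series b \<longleftrightarrow>
     \<not> (\<lambda>n. max (b n) 0) summable_on UNIV \<and> \<not> (\<lambda>n. - min (b n) 0) summable_on UNIV"
proof -
  have "filterlim (\<lambda>N. \<Sum>n<N. min (b n) 0) at_bot sequentially \<longleftrightarrow>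
        filterlim (\<lambda>N. \<Sum>n<N. - min (b n) 0) at_top sequentially"
    by (simp add: filterlim_uminus_at_top sum_negf)
  then show ?thesis
    unfolding conditional_series_def
    by (simp add: filterlim_partial_sums_at_top_iff_not_summable summable_on_UNIV_nonneg_real_iff)
qed

lemma conditional_series_comp_strict_mono_iff:
  assumes "strict_mono g"
  shows "conditional_series (\<lambda>n. b (g n)) \<longleftrightarrow>
     \<not> (\<lambda>n. max (b n) 0) summable_on range g \<and> \<not> (\<lambda>n. - min (b n) 0) summable_on range g"
  using summable_on_reindex[OF strict_mono_imp_inj_on[OF assms], of "\<lambda>n. max (b n) 0"]
    summable_on_reindex[OF strict_mono_imp_inj_on[OF assms], of "\<lambda>n. - min (b n) 0"]
  by (simp add: conditional_series_iff_not_summable_on comp_def)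

lemma conditional_series_mono_reindex:
  assumes "strict_mono g" and "\<And>n. n \<notin> range g \<Longrightarrow> b n = 0"
  shows "conditional_series (\<lambda>n. b (g n)) \<longleftrightarrow> conditional_series b"
proof -
  have on_range: "(\<lambda>n. h (b n)) summable_on range g \<longleftrightarrow> (\<lambda>n. h (b n)) summable_on UNIV"
    if "h 0 = 0" for h :: "real \<Rightarrow> real"
    using that assms(2) by (intro summable_on_cong_neutral) auto
  show ?thesis
    using on_range[of "\<lambda>x. max x 0"] on_range[of "\<lambda>x. - min x 0"]
    by (simp add: conditional_series_comp_strict_mono_iff[OF assms(1)]
        conditional_series_iff_not_summable_on)
qed

lemma conditional_series_subseries_iff:
  assumes "infinite X"
  shows "conditional_series (subseries X a) \<longleftrightarrow>
     \<not> (\<lambda>n. max (real_of_rat (a n)) 0) summable_on X \<and>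
     \<not> (\<lambda>n. - min (real_of_rat (a n)) 0) summable_on X"
  using conditional_series_comp_strict_mono_iff[OF strict_mono_enumerate[OF assms],
      of "\<lambda>n. real_of_rat (a n)"]
  by (simp add: subseries_def[abs_def] range_enumerate[OF assms])

lemma S_cc_mono_reindex:
  assumes "strict_mono g" and "\<And>n. n \<notin> range g \<Longrightarrow> a n = 0"
  shows "(\<lambda>n. a (g n)) \<in> S_cc \<longleftrightarrow> a \<in> S_cc"
proof -
  have "summable (\<lambda>n. real_of_rat (a (g n))) \<longleftrightarrow> summable (\<lambda>n. real_of_rat (a n))"
    using assms by (intro summable_mono_reindex) auto
  moreover have "conditional_series (\<lambda>n. real_of_rat (a (g n))) \<longleftrightarrow>
      conditional_series (\<lambda>n. real_of_rat (a n))"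
    using assms by (intro conditional_series_mono_reindex) auto
  ultimately show ?thesis
    unfolding S_cc_def using summable_LIMSEQ_zero by blast
qed

lemma infinite_residue_class: "r < m \<Longrightarrow> infinite {n::nat. n mod m = r}"
proof -
  assume r: "r < m"
  have "range (\<lambda>k. m * k + r) \<subseteq> {n. n mod m = r}"
    using r by auto
  moreover have "inj (\<lambda>k. m * k + r)"
    using r by (auto intro: injI)
  ultimately show ?thesis
    using range_inj_infinite infinite_super by blast
qed

lemma not_summable_on_residue_class:
  fixes f :: "nat \<Rightarrow> real"
  assumes "0 < m" and "\<not> f summable_on UNIV"
  shows "\<exists>r<m. \<not> f summable_on {n. n mod m = r}"
proof (rule ccontr)
  assume "\<not> ?thesis"
  then have "f summable_on (\<Union>r<m. {n. n mod m = r})"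
    by (intro summable_on_finite_union_disjoint) auto
  moreover have "(\<Union>r<m. {n. n mod m = r}) = UNIV"
    using assms(1) by auto
  ultimately show False
    using assms(2) by simp
qed

definition residue_complements :: "nat set set" where
  "residue_complements = (\<lambda>r. {n. n mod 3 \<noteq> r}) ` {..<3}"

lemma residue_complements_subset_inf_coinf: "residue_complements \<subseteq> inf_coinf"
proof
  fix X assume "X \<in> residue_complements"
  then obtain r where r: "r < 3" and X: "X = {n. n mod 3 \<noteq> r}"
    unfolding residue_complements_def by auto
  have "Suc r mod 3 \<noteq> r"
    by presburger
  then have "{n::nat. n mod 3 = Suc r mod 3} \<subseteq> X"
    using X by auto
  then have "infinite X"
    using infinite_residue_class[of "Suc r mod 3" 3] infinite_super by auto
  moreover have "UNIV - X = {n. n mod 3 = r}"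
    using X by auto
  ultimately show "X \<in> inf_coinf"
    unfolding inf_coinf_def using infinite_residue_class[OF r] by simp
qed

lemma card_residue_complements: "card residue_complements = 3"
  unfolding residue_complements_def
proof (subst card_image)
  show "inj_on (\<lambda>r. {n::nat. n mod 3 \<noteq> r}) {..<3}"
    by (rule inj_onI) (metis (mono_tags) lessThan_iff mem_Collect_eq mod_less)
qed simp

lemma ss_n_family_residue_complements: "ss_n_family residue_complements"
  unfolding ss_n_family_def
proof (intro conjI ballI residue_complements_subset_inf_coinf)
  fix a assume "a \<in> S_cc"
  then have "conditional_series (\<lambda>n. real_of_rat (a n))"
    unfolding S_cc_def by auto
  then have "\<not> (\<lambda>n. max (real_of_rat (a n)) 0) summable_on UNIV"
    and "\<not> (\<lambda>n. - min (real_of_rat (a n)) 0) summable_on UNIV"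
    unfolding conditional_series_iff_not_summable_on by auto
  then obtain d e
    where pos: "\<not> (\<lambda>n. max (real_of_rat (a n)) 0) summable_on {n. n mod 3 = d}"
      and neg: "\<not> (\<lambda>n. - min (real_of_rat (a n)) 0) summable_on {n. n mod 3 = e}"
    using not_summable_on_residue_class[of 3] by (meson zero_less_numeral)
  have "\<exists>r::nat. r < 3 \<and> r \<noteq> d \<and> r \<noteq> e"
    by presburger
  then obtain r where "r < 3" "r \<noteq> d" "r \<noteq> e"
    by blast
  define X where "X = {n::nat. n mod 3 \<noteq> r}"
  have X: "X \<in> residue_complements"
    using \<open>r < 3\<close> unfolding X_def residue_complements_def by auto
  have "{n. n mod 3 = d} \<subseteq> X" "{n. n mod 3 = e} \<subseteq> X"
    using \<open>r \<noteq> d\<close> \<open>r \<noteq> e\<close> unfolding X_def by auto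
  then have "\<not> (\<lambda>n. max (real_of_rat (a n)) 0) summable_on X"
    and "\<not> (\<lambda>n. - min (real_of_rat (a n)) 0) summable_on X"
    using pos neg summable_on_subset_banach by blast+
  moreover have "infinite X"
    using X residue_complements_subset_inf_coinf unfolding inf_coinf_def by auto
  ultimately have "conditional_series (subseries X a)"
    by (simp add: conditional_series_subseries_iff)
  with X show "\<exists>X\<in>residue_complements. conditional_series (subseries X a)" ..
qed

lemma obtain_strict_mono_alternating:
  assumes "infinite U" and "infinite V"
  obtains s :: "nat \<Rightarrow> nat"
  where "strict_mono s" and "\<And>n. s n \<in> (if even n then U else V)"
proof -
  have "\<exists>s. \<forall>n. s n \<in> (if even n then U else V) \<and> s n < s (Suc n)"
  proof (rule dependent_nat_choice)
    show "\<exists>x. x \<in> (if even 0 then U else V)"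
      using assms(1) by (simp add: infinite_imp_nonempty ex_in_conv)
    show "\<exists>y. y \<in> (if even (Suc n) then U else V) \<and> x < y" for x n
      using assms unfolding infinite_nat_iff_unbounded by auto
  qed
  then show ?thesis
    using that strict_mono_Suc_iff by blast
qed

definition alt_harmonic :: "nat \<Rightarrow> rat" where
  "alt_harmonic m = (-1) ^ m / of_nat (m div 2 + 1)"

lemma alt_harmonic_pos_iff: "0 < alt_harmonic m \<longleftrightarrow> even m"
  by (cases "even m") (auto simp: alt_harmonic_def add_pos_nonneg)

lemma alt_harmonic_neg_iff: "alt_harmonic m < 0 \<longleftrightarrow> odd m"
  by (cases "even m") (auto simp: alt_harmonic_def add_pos_nonneg)

lemma not_summable_inverse_Suc: "\<not> summable (\<lambda>k. 1 / real (Suc k))"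
  using not_summable_harmonic[where 'a = real] summable_Suc_iff[of "\<lambda>k. inverse (real k)"]
  by (simp add: divide_inverse)

lemma alt_harmonic_in_S_cc: "alt_harmonic \<in> S_cc"
proof -
  define h where "h m = 1 / real (m div 2 + 1)" for m
  have alt_harmonic_eq: "real_of_rat (alt_harmonic m) = (-1) ^ m * h m" for m
    by (simp add: alt_harmonic_def h_def of_rat_divide of_rat_power of_rat_add)
  have "h \<longlonglongrightarrow> 0"
    using filterlim_compose[OF LIMSEQ_inverse_real_of_nat filterlim_at_top_div_const_nat[of 2]]
    unfolding h_def by (simp add: divide_inverse add.commute)
  moreover have "h (Suc m) \<le> h m" for m
    by (simp add: h_def frac_le div_le_mono)
  ultimately have summable: "summable (\<lambda>m. real_of_rat (alt_harmonic m))"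
    using summable_Leibniz'(1)[of h] by (simp add: alt_harmonic_eq h_def)
  have not_summable_on: "\<not> f summable_on UNIV"
    if "inj g" and "\<And>k. f (g k) = 1 / real (Suc k)" for f g :: "nat \<Rightarrow> _"
  proof
    assume "f summable_on UNIV"
    then have "(f \<circ> g) summable_on UNIV"
      using summable_on_subset_banach summable_on_reindex[OF \<open>inj g\<close>] by blast
    then have "summable (f \<circ> g)"
      by (rule summable_on_imp_summable)
    then show False
      using not_summable_inverse_Suc that(2) by (simp add: comp_def)
  qed
  have "\<not> (\<lambda>m. max (real_of_rat (alt_harmonic m)) 0) summable_on UNIV"
    by (rule not_summable_on[of "\<lambda>k. 2 * k"]) (auto intro: injI simp: alt_harmonic_eq h_def)
  moreover have "\<not> (\<lambda>m. - min (real_of_rat (alt_harmonic m)) 0) summable_on UNIV"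
    by (rule not_summable_on[of "\<lambda>k. 2 * k + 1"]) (auto intro: injI simp: alt_harmonic_eq h_def)
  ultimately show ?thesis
    unfolding S_cc_def conditional_series_iff_not_summable_on
    using summable summable_LIMSEQ_zero by blast
qed

lemma ex_S_cc_not_conditional_along_two:
  assumes "X \<in> inf_coinf" and "Y \<in> inf_coinf"
  shows "\<exists>a\<in>S_cc. \<not> conditional_series (subseries X a) \<and> \<not> conditional_series (subseries Y a)"
proof -
  obtain s :: "nat \<Rightarrow> nat" where s: "strict_mono s" and s_in: "\<And>n. s n \<in> (if even n then - X else - Y)"
    using obtain_strict_mono_alternating[of "- X" "- Y"] assms
    unfolding inf_coinf_def Compl_eq_Diff_UNIV by blast
  define a where "a n = (if n \<in> range s then alt_harmonic (inv s n) else 0)" for n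
  have a_s: "a (s m) = alt_harmonic m" for m
    using strict_mono_imp_inj_on[OF s] by (simp add: a_def)
  have "a \<in> S_cc"
    using S_cc_mono_reindex[OF s, of a] a_s alt_harmonic_in_S_cc by (simp add: a_def)
  have sign: "(i \<in> X \<longrightarrow> a i \<le> 0) \<and> (i \<in> Y \<longrightarrow> 0 \<le> a i)" for i
  proof (cases "i \<in> range s")
    case True
    then obtain m where "i = s m"
      by auto
    then show ?thesis
      using s_in[of m] a_s[of m] alt_harmonic_pos_iff[of m] alt_harmonic_neg_iff[of m]
      by (cases "even m") auto
  qed (simp add: a_def)
  have "(\<lambda>n. max (real_of_rat (a n)) 0) summable_on X"
    using sign by (intro summable_on_0) auto
  moreover have "(\<lambda>n. - min (real_of_rat (a n)) 0) summable_on Y"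
    using sign by (intro summable_on_0) auto
  ultimately show ?thesis
    using \<open>a \<in> S_cc\<close> assms conditional_series_subseries_iff
    unfolding inf_coinf_def by blast
qed

lemma card_le_2_imp_doubleton:
  assumes "finite A" and "A \<noteq> {}" and "card A \<le> 2"
  obtains x y where "A = {x, y}"
proof -
  have "card A = 1 \<or> card A = 2"
    using assms by (simp add: le_Suc_eq numeral_2_eq_2)
  then show ?thesis
    by (metis card_1_singletonE card_2_iff insert_absorb2 that)
qed

lemma card_ss_n_family_ge_3:
  assumes family: "ss_n_family F" and "finite F"
  shows "3 \<le> card F"
proof (rule ccontr)
  assume "\<not> 3 \<le> card F"
  then have "card F \<le> 2"
    by simp
  moreover have "F \<noteq> {}"
    using family alt_harmonic_in_S_cc unfolding ss_n_family_def by blast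
  ultimately obtain X Y where F: "F = {X, Y}"
    using \<open>finite F\<close> card_le_2_imp_doubleton by blast
  then have "X \<in> inf_coinf" and "Y \<in> inf_coinf"
    using family unfolding ss_n_family_def by auto
  then obtain a where "a \<in> S_cc"
    and "\<not> conditional_series (subseries X a)" and "\<not> conditional_series (subseries Y a)"
    using ex_S_cc_not_conditional_along_two by blast
  then show False
    using family F unfolding ss_n_family_def by auto
qed

theorem mainTheorem14:
  shows "(\<exists>F. ss_n_family F \<and> finite F \<and> card F = 3) \<and>
         (\<forall>F. ss_n_family F \<longrightarrow> infinite F \<or> card F \<ge> 3)"
proof
  show "\<exists>F. ss_n_family F \<and> finite F \<and> card F = 3"
    using ss_n_family_residue_complements card_residue_complements
    by (intro exI[of _ residue_complements]) (simp add: card_ge_0_finite)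
  show "\<forall>F. ss_n_family F \<longrightarrow> infinite F \<or> card F \<ge> 3"
    using card_ss_n_family_ge_3 by blast
qed

end
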